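(* Let $A\in\mathbb{R}^{n\times n}$ with $A\ge 0$, $B\in\mathbb{R}^{n\times m}$, $C\in\mathbb{R}^{p\times n}$. For gains $\overline{K},\underline{K}\in\mathbb{R}^{m\times n}$ and $\overline{L},\underline{L}\in\mathbb{R}^{n\times p}$ let \[ M=\begin{bmatrix} A & B\overline{K} & B\underline{K} \\ \overline{L}C & A-\overline{L}C+B\overline{K} & B\underline{K} \\ \underline{L}C & B\overline{K} & A-\underline{L}C+B\underline{K} \end{bmatrix} \] and $\mathcal{X}=\{(x,\overline{x},\underline{x}) : x,\overline{x},\underline{x}\in\mathbb{R}^n_+,\ \underline{x}\le x\le \overline{x}\}$. The following statements are equivalent: (i) There exist $K\in\mathbb{R}^{m\times n}$ and $L\in\mathbb{R}^{n\times p}$ such that $A-LC$ and $A+BK$ are Schur, $A-LC\ge 0$, $A+BK\ge0$ and $LC\ge 0$. (ii) There exist gains $\overline{K},\underline{K},\overline{L},\underline{L}$ with $\underline{L}C\ge 0$ such that $M$ is Schur (i.e., the closed-loop system $(x,\overline{x},\underline{x})(t+1)=M(x,\overline{x},\underline{x})(t)$ is asymptotically stable) and $\mathcal{X}$ is invariant under $(x,\overline{x},\underline{x})(t+1)=M(x,\overline{x},\underline{x})(t)$.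
   Context: All inequalities between matrices or vectors are element-wise; $\mathbb{R}^n_+$ is the closed nonnegative orthant. A square matrix is Schur if its spectral radius is less than $1$. The matrix $M$ is the closed-loop matrix of the system $x(t+1)=Ax(t)+Bu(t)$, $y(t)=Cx(t)$ with upper and lower Luenberger observers $\overline{x}(t+1)=(A-\overline{L}C)\overline{x}(t)+\overline{L}y(t)+Bu(t)$, $\underline{x}(t+1)=(A-\underline{L}C)\underline{x}(t)+\underline{L}y(t)+Bu(t)$ and feedback $u(t)=\underline{K}\,\underline{x}(t)+\overline{K}\,\overline{x}(t)$. Invariance of $\mathcal{X}$ means every trajectory starting in $\mathcal{X}$ stays in $\mathcal{X}$ for all $t\ge0$. *)

theory Defs
  imports "HOL-Analysis.Analysis"
begin

definition nonneg_mat :: "real^'c^'r \<Rightarrow> bool" where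
  "nonneg_mat X \<longleftrightarrow> (\<forall>i j. 0 \<le> X $ i $ j)"

definition nonneg_vec :: "real^'n \<Rightarrow> bool" where
  "nonneg_vec v \<longleftrightarrow> (\<forall>i. 0 \<le> v $ i)"

definition vec_le :: "real^'n \<Rightarrow> real^'n \<Rightarrow> bool" where
  "vec_le u v \<longleftrightarrow> (\<forall>i. u $ i \<le> v $ i)"

text \<open>Schur: spectral radius < 1, i.e. every (complex) eigenvalue has modulus < 1.\<close>
definition schur :: "real^'n^'n \<Rightarrow> bool" where
  "schur X \<longleftrightarrow>
     (\<forall>l::complex. det (mat l - (\<chi> i j. complex_of_real (X $ i $ j))) = 0 \<longrightarrow> cmod l < 1)"

text \<open>Stacked state (x, xbar, xund) indexed by 'n + 'n + 'n.\<close>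
definition comp_x :: "real^('n + 'n + 'n) \<Rightarrow> real^'n" where
  "comp_x z = (\<chi> i. z $ Inl i)"
definition comp_xo :: "real^('n + 'n + 'n) \<Rightarrow> real^'n" where
  "comp_xo z = (\<chi> i. z $ Inr (Inl i))"
definition comp_xu :: "real^('n + 'n + 'n) \<Rightarrow> real^'n" where
  "comp_xu z = (\<chi> i. z $ Inr (Inr i))"

definition block3 ::
  "real^'n^'n \<Rightarrow> real^'n^'n \<Rightarrow> real^'n^'n \<Rightarrow>
   real^'n^'n \<Rightarrow> real^'n^'n \<Rightarrow> real^'n^'n \<Rightarrow>
   real^'n^'n \<Rightarrow> real^'n^'n \<Rightarrow> real^'n^'n \<Rightarrow> real^('n + 'n + 'n)^('n + 'n + 'n)" where
  "block3 M11 M12 M13 M21 M22 M23 M31 M32 M33 =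
    (\<chi> r c. (case r of
        Inl i \<Rightarrow> (case c of Inl j \<Rightarrow> M11$i$j | Inr (Inl j) \<Rightarrow> M12$i$j | Inr (Inr j) \<Rightarrow> M13$i$j)
      | Inr (Inl i) \<Rightarrow> (case c of Inl j \<Rightarrow> M21$i$j | Inr (Inl j) \<Rightarrow> M22$i$j | Inr (Inr j) \<Rightarrow> M23$i$j)
      | Inr (Inr i) \<Rightarrow> (case c of Inl j \<Rightarrow> M31$i$j | Inr (Inl j) \<Rightarrow> M32$i$j | Inr (Inr j) \<Rightarrow> M33$i$j)))"

definition closed_loop ::
  "real^'n^'n \<Rightarrow> real^'m^'n \<Rightarrow> real^'n^'p \<Rightarrow> real^'n^'m \<Rightarrow> real^'n^'m \<Rightarrow>
   real^'p^'n \<Rightarrow> real^'p^'n \<Rightarrow> real^('n + 'n + 'n)^('n + 'n + 'n)" where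
  "closed_loop A B C Ko Ku Lo Lu =
     block3 A (B ** Ko) (B ** Ku)
            (Lo ** C) (A - Lo ** C + B ** Ko) (B ** Ku)
            (Lu ** C) (B ** Ko) (A - Lu ** C + B ** Ku)"

definition X_set :: "(real^('n::finite + 'n + 'n)) set" where
  "X_set = {z. nonneg_vec (comp_x z) \<and> nonneg_vec (comp_xo z) \<and> nonneg_vec (comp_xu z)
               \<and> vec_le (comp_xu z) (comp_x z) \<and> vec_le (comp_x z) (comp_xo z)}"

definition invariant_set :: "real^'k^'k \<Rightarrow> (real^'k) set \<Rightarrow> bool" where
  "invariant_set M S \<longleftrightarrow> (\<forall>z0\<in>S. \<forall>t::nat. (((*v) M) ^^ t) z0 \<in> S)"

end

theory Submission
  imports Defs
begin

text \<open>
  For (i) \<Longrightarrow> (ii) take \<open>Ko = 0\<close>, \<open>Ku = K\<close>, \<open>Lo = Lu = L\<close>. With \<open>Q = L C\<close> the new state satisfies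
  \<open>x' - xu' = (A - Q)(x - xu)\<close>, \<open>xo' - x' = (A - Q)(xo - x)\<close> and \<open>xu' = (A + B K) xu + Q (x - xu)\<close>,
  so the order \<open>0 \<le> xu \<le> x \<le> xo\<close> is preserved; in the coordinates \<open>(x - xu, xu, xo)\<close> the closed
  loop is block triangular with diagonal blocks \<open>A - Q\<close>, \<open>A + B K\<close>, \<open>A - Q\<close>, so every eigenvalue
  of \<open>M\<close> is one of \<open>A - Q\<close> or \<open>A + B K\<close>.

  For (ii) \<Longrightarrow> (i) take \<open>K = Ko + Ku\<close>, \<open>L = Lu\<close>. If \<open>v\<close> is an eigenvector of \<open>A + B K\<close> then
  \<open>(v, v, v)\<close> is one of \<open>M\<close>, and if \<open>u\<close> is a left eigenvector of \<open>A - L C\<close> then \<open>(u, 0, -u)\<close> is a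
  left eigenvector of \<open>M\<close>; hence both matrices are Schur. Invariance applied to \<open>(v, v, v)\<close> and
  \<open>(v, v, 0)\<close> with \<open>v \<ge> 0\<close> gives \<open>(A + B K) v \<ge> 0\<close> and \<open>(A - L C) v \<ge> 0\<close>.
\<close>

lemma mat_mult_vec: "mat l *v v = l *s (v :: 'a::semiring_1^'n)"
  by (simp add: vec_eq_iff matrix_vector_mult_def mat_def if_distrib[where f = "\<lambda>a. a * _"]
      cong: if_cong)

lemma sum_UNIV_Plus:
  "sum f (UNIV :: ('a::finite + 'b::finite) set) = sum (f \<circ> Inl) UNIV + sum (f \<circ> Inr) UNIV"
  by (metis UNIV_Plus_UNIV finite sum.Plus)

lemma uminus_vector_matrix_mult: "(- x) v* (M :: 'a::ring_1^'n^'m) = - (x v* M)"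
  using vector_matrix_mult_diff_distrib[of 0 x M] by simp

definition stack3 :: "'a^'n \<Rightarrow> 'a^'n \<Rightarrow> 'a^'n \<Rightarrow> 'a^('n + 'n + 'n)" where
  "stack3 x y z = (\<chi> r. case r of Inl i \<Rightarrow> x $ i | Inr (Inl i) \<Rightarrow> y $ i | Inr (Inr i) \<Rightarrow> z $ i)"

lemma stack3_nth [simp]:
  "stack3 x y z $ Inl i = x $ i" "stack3 x y z $ Inr (Inl i) = y $ i" "stack3 x y z $ Inr (Inr i) = z $ i"
  by (simp_all add: stack3_def)

lemma stack3_cases: obtains x y z where "w = stack3 x y z"
proof
  show "w = stack3 (\<chi> i. w $ Inl i) (\<chi> i. w $ Inr (Inl i)) (\<chi> i. w $ Inr (Inr i))"
    by (simp add: vec_eq_iff stack3_def split: sum.split)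
qed

lemma stack3_eq_iff [simp]: "stack3 x y z = stack3 x' y' z' \<longleftrightarrow> x = x' \<and> y = y' \<and> z = z'"
  by (auto simp: vec_eq_iff stack3_def split: sum.split)

lemma stack3_zero [simp]: "stack3 0 0 0 = 0"
  by (simp add: vec_eq_iff stack3_def split: sum.split)

lemma scalar_mult_stack3: "c *s stack3 x y z = stack3 (c *s x) (c *s y) (c *s z)"
  by (simp add: vec_eq_iff stack3_def split: sum.split)

definition block_matrix3 ::
  "'a^'n^'n \<Rightarrow> 'a^'n^'n \<Rightarrow> 'a^'n^'n \<Rightarrow> 'a^'n^'n \<Rightarrow> 'a^'n^'n \<Rightarrow> 'a^'n^'n \<Rightarrow>
   'a^'n^'n \<Rightarrow> 'a^'n^'n \<Rightarrow> 'a^'n^'n \<Rightarrow> 'a^('n + 'n + 'n)^('n + 'n + 'n)" where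
  "block_matrix3 M11 M12 M13 M21 M22 M23 M31 M32 M33 =
    (\<chi> r c. (case r of
        Inl i \<Rightarrow> (case c of Inl j \<Rightarrow> M11$i$j | Inr (Inl j) \<Rightarrow> M12$i$j | Inr (Inr j) \<Rightarrow> M13$i$j)
      | Inr (Inl i) \<Rightarrow> (case c of Inl j \<Rightarrow> M21$i$j | Inr (Inl j) \<Rightarrow> M22$i$j | Inr (Inr j) \<Rightarrow> M23$i$j)
      | Inr (Inr i) \<Rightarrow> (case c of Inl j \<Rightarrow> M31$i$j | Inr (Inl j) \<Rightarrow> M32$i$j | Inr (Inr j) \<Rightarrow> M33$i$j)))"

lemma block3_eq_block_matrix3: "block3 = block_matrix3"
  by (intro ext) (simp add: block3_def block_matrix3_def)

lemma map_matrix_block_matrix3: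
  "map_matrix f (block_matrix3 M11 M12 M13 M21 M22 M23 M31 M32 M33) =
   block_matrix3 (map_matrix f M11) (map_matrix f M12) (map_matrix f M13) (map_matrix f M21)
     (map_matrix f M22) (map_matrix f M23) (map_matrix f M31) (map_matrix f M32) (map_matrix f M33)"
  by (simp add: vec_eq_iff block_matrix3_def stack3_def split: sum.split)

lemma block_matrix3_mult_stack3:
  "block_matrix3 M11 M12 M13 M21 M22 M23 M31 M32 M33 *v stack3 x y z =
   stack3 (M11 *v x + M12 *v y + M13 *v z) (M21 *v x + M22 *v y + M23 *v z)
     (M31 *v x + M32 *v y + M33 *v z)"
  by (simp add: vec_eq_iff split_sum_all block_matrix3_def matrix_vector_mult_def sum_UNIV_Plus
      o_def add.assoc)

lemma stack3_mult_block_matrix3: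
  "stack3 x y z v* block_matrix3 M11 M12 M13 M21 M22 M23 M31 M32 M33 =
   stack3 (x v* M11 + y v* M21 + z v* M31) (x v* M12 + y v* M22 + z v* M32)
     (x v* M13 + y v* M23 + z v* M33)"
  by (simp add: vec_eq_iff split_sum_all block_matrix3_def vector_matrix_mult_def sum_UNIV_Plus
      o_def add.assoc)

definition eigenvalue :: "'a::field^'n^'n \<Rightarrow> 'a \<Rightarrow> bool" where
  "eigenvalue M l \<longleftrightarrow> (\<exists>v. v \<noteq> 0 \<and> M *v v = l *s v)"

lemma eigenvalue_iff_det: "eigenvalue M l \<longleftrightarrow> det (mat l - M) = 0"
proof -
  have "det (mat l - M) \<noteq> 0 \<longleftrightarrow> (\<forall>v. (mat l - M) *v v = 0 \<longrightarrow> v = 0)"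
    by (simp only: invertible_det_nz[symmetric] invertible_left_inverse matrix_left_invertible_ker)
  moreover have "(mat l - M) *v v = 0 \<longleftrightarrow> M *v v = l *s v" for v
    by (auto simp: matrix_vector_mult_diff_rdistrib mat_mult_vec)
  ultimately show ?thesis
    unfolding eigenvalue_def by blast
qed

lemma eigenvalue_transpose [simp]: "eigenvalue (transpose M) l \<longleftrightarrow> eigenvalue M l"
proof -
  have "transpose (mat l - M) = mat l - transpose M"
    by (simp add: vec_eq_iff transpose_def mat_def)
  then show ?thesis
    by (metis eigenvalue_iff_det det_transpose)
qed

lemma eigenvalue_iff_left_eigenvector: "eigenvalue M l \<longleftrightarrow> (\<exists>u. u \<noteq> 0 \<and> u v* M = l *s u)"
  using eigenvalue_transpose[of M l] unfolding eigenvalue_def by simp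

abbreviation cmat :: "real^'c^'r \<Rightarrow> complex^'c^'r" where
  "cmat \<equiv> map_matrix complex_of_real"

lemma cmat_add: "cmat (X + Y) = cmat X + cmat Y"
  and cmat_diff: "cmat (X - Y) = cmat X - cmat Y"
  and cmat_zero: "cmat 0 = 0"
  by (simp_all add: vec_eq_iff)

lemma schur_iff_eigenvalue: "schur X \<longleftrightarrow> (\<forall>l. eigenvalue (cmat X) l \<longrightarrow> cmod l < 1)"
  by (simp add: schur_def eigenvalue_iff_det map_matrix_def)

lemma schur_eigenvalue_subset:
  assumes "schur Y" and "\<And>l. eigenvalue (cmat X) l \<Longrightarrow> eigenvalue (cmat Y) l"
  shows "schur X"
  using assms by (simp add: schur_iff_eigenvalue)

lemma eigenvalue_closed_loop_of_feedback:
  assumes "eigenvalue (A + Bo + Bu) l"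
  shows "eigenvalue (block_matrix3 A Bo Bu Qo (A - Qo + Bo) Bu Qu Bo (A - Qu + Bu)) l"
proof -
  obtain v where "v \<noteq> 0" and v: "(A + Bo + Bu) *v v = l *s v"
    using assms unfolding eigenvalue_def by blast
  have "block_matrix3 A Bo Bu Qo (A - Qo + Bo) Bu Qu Bo (A - Qu + Bu) *v stack3 v v v =
        stack3 ((A + Bo + Bu) *v v) ((A + Bo + Bu) *v v) ((A + Bo + Bu) *v v)"
    by (simp add: block_matrix3_mult_stack3 algebra_simps)
  also have "\<dots> = l *s stack3 v v v"
    by (simp add: v scalar_mult_stack3)
  finally show ?thesis
    using \<open>v \<noteq> 0\<close> unfolding eigenvalue_def by (metis stack3_eq_iff stack3_zero)
qed

lemma eigenvalue_closed_loop_of_observer: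
  assumes "eigenvalue (A - Qu) l"
  shows "eigenvalue (block_matrix3 A Bo Bu Qo (A - Qo + Bo) Bu Qu Bo (A - Qu + Bu)) l"
proof -
  obtain u where "u \<noteq> 0" and u: "u v* (A - Qu) = l *s u"
    using assms unfolding eigenvalue_iff_left_eigenvector by blast
  have "stack3 u 0 (- u) v* block_matrix3 A Bo Bu Qo (A - Qo + Bo) Bu Qu Bo (A - Qu + Bu) =
        stack3 (u v* (A - Qu)) 0 (- (u v* (A - Qu)))"
    by (simp add: stack3_mult_block_matrix3 uminus_vector_matrix_mult algebra_simps)
  also have "\<dots> = l *s stack3 u 0 (- u)"
    by (simp add: u scalar_mult_stack3)
  finally show ?thesis
    using \<open>u \<noteq> 0\<close> unfolding eigenvalue_iff_left_eigenvector by (metis stack3_eq_iff stack3_zero)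
qed

lemma eigenvalue_separated_closed_loop:
  assumes "eigenvalue (block_matrix3 A 0 P Q (A - Q) P Q 0 (A - Q + P)) l"
  shows "eigenvalue (A - Q) l \<or> eigenvalue (A + P) l"
proof -
  obtain w where "w \<noteq> 0" and w: "block_matrix3 A 0 P Q (A - Q) P Q 0 (A - Q + P) *v w = l *s w"
    using assms unfolding eigenvalue_def by blast
  obtain x xo xu where xs: "w = stack3 x xo xu"
    by (rule stack3_cases)
  have x: "A *v x + P *v xu = l *s x"
    and xo: "Q *v x + (A - Q) *v xo + P *v xu = l *s xo"
    and xu: "Q *v x + (A - Q + P) *v xu = l *s xu"
    using w unfolding xs block_matrix3_mult_stack3 scalar_mult_stack3 by simp_all
  consider "x - xu \<noteq> 0" | "x = xu" "x \<noteq> 0" | "x = 0" "xu = 0" "xo \<noteq> 0"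
    using \<open>w \<noteq> 0\<close> xs by force
  then show ?thesis
  proof cases
    case 1
    have "(A - Q) *v (x - xu) = (A *v x + P *v xu) - (Q *v x + (A - Q + P) *v xu)"
      by (simp add: algebra_simps)
    also have "\<dots> = l *s (x - xu)"
      by (simp add: x xu vector_ssub_ldistrib)
    finally show ?thesis
      using 1 unfolding eigenvalue_def by blast
  next
    case 2
    then show ?thesis
      using x unfolding eigenvalue_def by (auto simp: algebra_simps)
  next
    case 3
    then show ?thesis
      using xo unfolding eigenvalue_def by auto
  qed
qed

lemma cmat_closed_loop:
  "cmat (closed_loop A B C Ko Ku Lo Lu) =
   block_matrix3 (cmat A) (cmat (B ** Ko)) (cmat (B ** Ku))
     (cmat (Lo ** C)) (cmat A - cmat (Lo ** C) + cmat (B ** Ko)) (cmat (B ** Ku))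
     (cmat (Lu ** C)) (cmat (B ** Ko)) (cmat A - cmat (Lu ** C) + cmat (B ** Ku))"
  by (simp add: closed_loop_def block3_eq_block_matrix3 map_matrix_block_matrix3 cmat_add cmat_diff)

lemma schur_feedback_of_schur_closed_loop:
  assumes "schur (closed_loop A B C Ko Ku Lo Lu)"
  shows "schur (A + B ** (Ko + Ku))"
  using assms
proof (rule schur_eigenvalue_subset)
  fix l
  assume "eigenvalue (cmat (A + B ** (Ko + Ku))) l"
  then show "eigenvalue (cmat (closed_loop A B C Ko Ku Lo Lu)) l"
    unfolding cmat_closed_loop
    by (intro eigenvalue_closed_loop_of_feedback) (simp add: matrix_add_ldistrib cmat_add add.assoc)
qed

lemma schur_observer_of_schur_closed_loop:
  assumes "schur (closed_loop A B C Ko Ku Lo Lu)"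
  shows "schur (A - Lu ** C)"
  using assms
proof (rule schur_eigenvalue_subset)
  fix l
  assume "eigenvalue (cmat (A - Lu ** C)) l"
  then show "eigenvalue (cmat (closed_loop A B C Ko Ku Lo Lu)) l"
    unfolding cmat_closed_loop
    by (intro eigenvalue_closed_loop_of_observer) (simp add: cmat_diff)
qed

lemma schur_separated_closed_loop:
  assumes "schur (A - L ** C)" and "schur (A + B ** K)"
  shows "schur (closed_loop A B C 0 K L L)"
  unfolding schur_iff_eigenvalue
proof (intro allI impI)
  fix l
  assume "eigenvalue (cmat (closed_loop A B C 0 K L L)) l"
  then have "eigenvalue (cmat (A - L ** C)) l \<or> eigenvalue (cmat (A + B ** K)) l"
    unfolding cmat_closed_loop
    by (simp add: cmat_zero cmat_add cmat_diff eigenvalue_separated_closed_loop)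
  then show "cmod l < 1"
    using assms unfolding schur_iff_eigenvalue by blast
qed

lemma nonneg_vec_iff: "nonneg_vec v \<longleftrightarrow> 0 \<le> v"
  and vec_le_iff: "vec_le u v \<longleftrightarrow> u \<le> v"
  and nonneg_mat_iff: "nonneg_mat X \<longleftrightarrow> 0 \<le> X"
  by (simp_all add: nonneg_vec_def vec_le_def nonneg_mat_def less_eq_vec_def)

lemma nonneg_matrix_vector_mult:
  fixes P :: "'a::linordered_semidom^'n^'m"
  assumes "0 \<le> P" "0 \<le> v" shows "0 \<le> P *v v"
  using assms by (auto simp: less_eq_vec_def matrix_vector_mult_def intro!: sum_nonneg)

lemma nonneg_matrix_iff_nonneg_mult:
  fixes P :: "'a::linordered_semidom^'n^'m"
  shows "0 \<le> P \<longleftrightarrow> (\<forall>v. 0 \<le> v \<longrightarrow> 0 \<le> P *v v)"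
proof (intro iffI allI impI)
  assume "\<forall>v. 0 \<le> v \<longrightarrow> 0 \<le> P *v v"
  then have "0 \<le> P *v axis j 1" for j
    by (simp add: less_eq_vec_def axis_def)
  moreover have "(P *v axis j 1) $ i = P $ i $ j" for i j
    by (simp add: matrix_vector_mult_def axis_def if_distrib[where f = "\<lambda>a. _ * a"] cong: if_cong)
  ultimately show "0 \<le> P"
    by (simp add: less_eq_vec_def)
qed (rule nonneg_matrix_vector_mult)

lemma stack3_in_X_set: "stack3 x xo xu \<in> X_set \<longleftrightarrow> 0 \<le> xu \<and> xu \<le> x \<and> x \<le> xo"
  by (auto simp: X_set_def comp_x_def comp_xo_def comp_xu_def nonneg_vec_iff vec_le_iff
      intro: order.trans)

lemma invariant_set_iff_step: "invariant_set M S \<longleftrightarrow> (\<forall>z\<in>S. M *v z \<in> S)"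
proof
  assume "invariant_set M S"
  then show "\<forall>z\<in>S. M *v z \<in> S"
    unfolding invariant_set_def by (metis funpow_0 funpow_Suc_right o_apply)
next
  assume step: "\<forall>z\<in>S. M *v z \<in> S"
  have "((*v) M ^^ t) z \<in> S" if "z \<in> S" for z t
    using that by (induction t) (simp_all add: step)
  then show "invariant_set M S"
    unfolding invariant_set_def by blast
qed

lemma closed_loop_mult_stack3:
  "closed_loop A B C Ko Ku Lo Lu *v stack3 x xo xu =
   stack3 (A *v x + (B ** Ko) *v xo + (B ** Ku) *v xu)
     ((Lo ** C) *v x + (A - Lo ** C + B ** Ko) *v xo + (B ** Ku) *v xu)
     ((Lu ** C) *v x + (B ** Ko) *v xo + (A - Lu ** C + B ** Ku) *v xu)"
  by (simp add: closed_loop_def block3_eq_block_matrix3 block_matrix3_mult_stack3)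

lemma nonneg_feedback_of_invariant_closed_loop:
  fixes A :: "real^'n^'n"
  assumes "invariant_set (closed_loop A B C Ko Ku Lo Lu) X_set"
  shows "0 \<le> A + B ** (Ko + Ku)"
  unfolding nonneg_matrix_iff_nonneg_mult
proof (intro allI impI)
  fix v :: "real^'n"
  assume "0 \<le> v"
  then have "closed_loop A B C Ko Ku Lo Lu *v stack3 v v v \<in> X_set"
    using assms by (simp add: invariant_set_iff_step stack3_in_X_set)
  then show "0 \<le> (A + B ** (Ko + Ku)) *v v"
    by (simp add: closed_loop_mult_stack3 stack3_in_X_set matrix_add_ldistrib algebra_simps)
qed

lemma nonneg_observer_of_invariant_closed_loop:
  fixes A :: "real^'n^'n"
  assumes "invariant_set (closed_loop A B C Ko Ku Lo Lu) X_set"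
  shows "0 \<le> A - Lu ** C"
  unfolding nonneg_matrix_iff_nonneg_mult
proof (intro allI impI)
  fix v :: "real^'n"
  assume "0 \<le> v"
  then have "closed_loop A B C Ko Ku Lo Lu *v stack3 v v 0 \<in> X_set"
    using assms by (simp add: invariant_set_iff_step stack3_in_X_set)
  then show "0 \<le> (A - Lu ** C) *v v"
    by (simp add: closed_loop_mult_stack3 stack3_in_X_set algebra_simps)
qed

lemma invariant_separated_closed_loop:
  fixes A :: "real^'n^'n"
  assumes AQ: "0 \<le> A - L ** C" and AP: "0 \<le> A + B ** K" and Q: "0 \<le> L ** C"
  shows "invariant_set (closed_loop A B C 0 K L L) X_set"
  unfolding invariant_set_iff_step
proof
  fix z :: "real^('n + 'n + 'n)"
  assume "z \<in> X_set"
  moreover obtain x xo xu where z: "z = stack3 x xo xu"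
    by (rule stack3_cases)
  ultimately have "0 \<le> xu" "0 \<le> x - xu" "0 \<le> xo - x"
    by (simp_all add: stack3_in_X_set)
  define x' where "x' = A *v x + (B ** K) *v xu"
  have Mz: "closed_loop A B C 0 K L L *v z =
        stack3 x' (x' + (A - L ** C) *v (xo - x)) (x' - (A - L ** C) *v (x - xu))"
    unfolding z x'_def closed_loop_mult_stack3 by (simp add: algebra_simps)
  have "x' - (A - L ** C) *v (x - xu) = (A + B ** K) *v xu + (L ** C) *v (x - xu)"
    unfolding x'_def by (simp add: algebra_simps)
  then have "0 \<le> x' - (A - L ** C) *v (x - xu)"
    using \<open>0 \<le> xu\<close> \<open>0 \<le> x - xu\<close> AP Q by (simp add: nonneg_matrix_vector_mult)
  moreover have "0 \<le> (A - L ** C) *v (x - xu)" "0 \<le> (A - L ** C) *v (xo - x)"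
    using \<open>0 \<le> x - xu\<close> \<open>0 \<le> xo - x\<close> AQ by (simp_all add: nonneg_matrix_vector_mult)
  ultimately show "closed_loop A B C 0 K L L *v z \<in> X_set"
    unfolding Mz stack3_in_X_set by (simp add: diff_le_eq)
qed

theorem theorem1:
  fixes A :: "real^'n^'n" and B :: "real^'m^'n" and C :: "real^'n^'p"
  assumes "nonneg_mat A"
  shows "(\<exists>(K :: real^'n^'m) (L :: real^'p^'n).
            schur (A - L ** C) \<and> schur (A + B ** K) \<and>
            nonneg_mat (A - L ** C) \<and> nonneg_mat (A + B ** K) \<and> nonneg_mat (L ** C))
     \<longleftrightarrow>
         (\<exists>(Ko :: real^'n^'m) (Ku :: real^'n^'m) (Lo :: real^'p^'n) (Lu :: real^'p^'n).
            nonneg_mat (Lu ** C) \<and>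
            schur (closed_loop A B C Ko Ku Lo Lu) \<and>
            invariant_set (closed_loop A B C Ko Ku Lo Lu) X_set)"
  unfolding nonneg_mat_iff
proof
  assume "\<exists>K L. schur (A - L ** C) \<and> schur (A + B ** K) \<and>
            0 \<le> A - L ** C \<and> 0 \<le> A + B ** K \<and> 0 \<le> L ** C"
  then obtain K L where "schur (A - L ** C)" "schur (A + B ** K)"
    and "0 \<le> A - L ** C" "0 \<le> A + B ** K" "0 \<le> L ** C"
    by blast
  then have "schur (closed_loop A B C 0 K L L)"
    and "invariant_set (closed_loop A B C 0 K L L) X_set"
    by (blast intro: schur_separated_closed_loop invariant_separated_closed_loop)+
  with \<open>0 \<le> L ** C\<close> show "\<exists>Ko Ku Lo Lu. 0 \<le> Lu ** C \<and> schur (closed_loop A B C Ko Ku Lo Lu) \<and>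
            invariant_set (closed_loop A B C Ko Ku Lo Lu) X_set"
    by blast
next
  assume "\<exists>Ko Ku Lo Lu. 0 \<le> Lu ** C \<and> schur (closed_loop A B C Ko Ku Lo Lu) \<and>
            invariant_set (closed_loop A B C Ko Ku Lo Lu) X_set"
  then obtain Ko Ku Lo Lu where "0 \<le> Lu ** C" "schur (closed_loop A B C Ko Ku Lo Lu)"
    and "invariant_set (closed_loop A B C Ko Ku Lo Lu) X_set"
    by blast
  then have "schur (A - Lu ** C)" "schur (A + B ** (Ko + Ku))"
    and "0 \<le> A - Lu ** C" "0 \<le> A + B ** (Ko + Ku)"
    by (blast intro: schur_observer_of_schur_closed_loop schur_feedback_of_schur_closed_loop
        nonneg_observer_of_invariant_closed_loop nonneg_feedback_of_invariant_closed_loop)+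
  with \<open>0 \<le> Lu ** C\<close> show "\<exists>K L. schur (A - L ** C) \<and> schur (A + B ** K) \<and>
            0 \<le> A - L ** C \<and> 0 \<le> A + B ** K \<and> 0 \<le> L ** C"
    by blast
qed

end
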